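(* Let $3\le w<n$. If there exists a Steiner system $S(3,w,n)$ such that every $S(2,w-1,n-1)$ system derived from it is resolvable, then $q'_0(3,w,n)=\frac{n-2}{w-2}+1$.
   Context: $\mathbb{Z}_q=\{0,\dots,q-1\}$ (an alphabet); $\mathrm{wt}$ = number of nonzero coordinates; $d$ = Hamming distance; $J_q(n,w)$ = weight-$w$ words of $\mathbb{Z}_q^n$. An $(n,w,d)_q$ code of size $M$ is a subset $C\subseteq J_q(n,w)$ with $|C|=M$ and pairwise distances at least $d$. A Steiner system $S(t,k,n)$ is a pair $(N,B)$, $|N|=n$, $B$ a set of $k$-subsets (blocks) of $N$ with every $t$-subset of $N$ in exactly one block. For a point $p\in N$ (when $t\ge2$), the derived system is $(N\setminus\{p\},\{\beta\setminus\{p\}: p\in\beta\in B\})$, an $S(t-1,k-1,n-1)$. A Steiner system $S(t,k,n)$ is resolvable if its block set can be partitioned into classes each of which is a partition of $N$. For $t,k,n$ such that an $S(t,k,n)$ exists, $q'_0(t,k,n)$ is the smallest $q$ for which an $(n,k,2k-t+1)_q$ code of size $\binom{n}{t}/\binom{k}{t}$ exists. *)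

theory Defs
  imports Complex_Main "HOL-Library.Disjoint_Sets"
begin

definition wt :: "nat list \<Rightarrow> nat" where
  "wt x = card {i. i < length x \<and> x ! i \<noteq> 0}"

definition hdist :: "nat list \<Rightarrow> nat list \<Rightarrow> nat" where
  "hdist x y = card {i. i < length x \<and> x ! i \<noteq> y ! i}"

definition Jq :: "nat \<Rightarrow> nat \<Rightarrow> nat \<Rightarrow> nat list set" where
  "Jq q n w = {x. length x = n \<and> set x \<subseteq> {0..<q} \<and> wt x = w}"

definition cw_code :: "nat \<Rightarrow> nat \<Rightarrow> nat \<Rightarrow> nat \<Rightarrow> nat \<Rightarrow> nat list set \<Rightarrow> bool" where
  "cw_code q n w d M C \<longleftrightarrow> C \<subseteq> Jq q n w \<and> card C = M \<and>
     (\<forall>x\<in>C. \<forall>y\<in>C. x \<noteq> y \<longrightarrow> hdist x y \<ge> d)"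

definition steiner :: "nat \<Rightarrow> nat \<Rightarrow> nat \<Rightarrow> 'a set \<Rightarrow> 'a set set \<Rightarrow> bool" where
  "steiner t k n N B \<longleftrightarrow> finite N \<and> card N = n \<and>
     (\<forall>b\<in>B. b \<subseteq> N \<and> card b = k) \<and>
     (\<forall>T. T \<subseteq> N \<and> card T = t \<longrightarrow> (\<exists>!b. b \<in> B \<and> T \<subseteq> b))"

definition derived_blocks :: "'a set set \<Rightarrow> 'a \<Rightarrow> 'a set set" where
  "derived_blocks B p = {b - {p} | b. b \<in> B \<and> p \<in> b}"

definition resolvable :: "'a set \<Rightarrow> 'a set set \<Rightarrow> bool" where
  "resolvable N B \<longleftrightarrow> (\<exists>P. partition_on B P \<and> (\<forall>C\<in>P. partition_on N C))"

definition q0' :: "nat \<Rightarrow> nat \<Rightarrow> nat \<Rightarrow> nat" where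
  "q0' t k n = (LEAST q. \<exists>C. cw_code q n k (2 * k - t + 1) ((n choose t) div (k choose t)) C)"

end

theory Submission
  imports Defs
begin

text \<open>Write \<open>\<lambda> = (n - 2) / (w - 2)\<close> for the number of blocks of an \<open>S(3,w,n)\<close> through two points.
  In a weight-\<open>w\<close> code of distance \<open>2w - 2\<close>, two supports share at most two coordinates, and
  if they share two the words differ on both. A code as large as an \<open>S(3,w,n)\<close> is therefore a
  Steiner system on its supports, and the \<open>\<lambda>\<close> codewords whose supports contain two fixed
  coordinates need \<open>\<lambda>\<close> distinct nonzero symbols there, so \<open>q \<ge> \<lambda> + 1\<close>. Conversely, label each
  point \<open>p\<close> of a block \<open>b\<close> by the parallel class of \<open>b - {p}\<close> in a resolution of the derived
  system at \<open>p\<close>: there are at most \<open>\<lambda>\<close> classes, and blocks meeting in \<open>{p, r}\<close> get different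
  labels at \<open>p\<close> because \<open>b - {p}\<close> and \<open>b' - {p}\<close> meet in \<open>r\<close>.\<close>

lemma steiner_points:
  assumes "steiner t k n N B"
  shows "finite N" "card N = n"
  using assms unfolding steiner_def by simp_all

lemma steiner_block:
  assumes "steiner t k n N B" "b \<in> B"
  shows "b \<subseteq> N" "card b = k" "finite b"
proof -
  show "b \<subseteq> N" "card b = k" using assms unfolding steiner_def by simp_all
  then show "finite b" using steiner_points(1)[OF assms(1)] by (meson finite_subset)
qed

lemma steiner_finite_blocks:
  assumes "steiner t k n N B"
  shows "finite B"
proof -
  have "B \<subseteq> Pow N" using steiner_block(1)[OF assms] by blast
  then show ?thesis using steiner_points(1)[OF assms] by (meson finite_Pow_iff finite_subset)
qed

lemma steiner_block_unique:
  assumes "steiner t k n N B" "b \<in> B" "b' \<in> B" "T \<subseteq> b" "T \<subseteq> b'" "card T = t"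
  shows "b = b'"
proof -
  have "T \<subseteq> N" using steiner_block(1)[OF assms(1,2)] assms(4) by blast
  then have "\<exists>!b. b \<in> B \<and> T \<subseteq> b" using assms(1,6) unfolding steiner_def by simp
  then show ?thesis using assms(2-5) by blast
qed

lemma steiner_covers:
  assumes "steiner t k n N B" "T \<subseteq> N" "card T = t"
  shows "\<exists>b\<in>B. T \<subseteq> b"
proof -
  have "\<exists>!b. b \<in> B \<and> T \<subseteq> b" using assms unfolding steiner_def by simp
  then show ?thesis by blast
qed

lemma steiner_card_Int_less:
  assumes "steiner t k n N B" "b \<in> B" "b' \<in> B" "b \<noteq> b'"
  shows "card (b \<inter> b') < t"
proof (rule ccontr)
  assume "\<not> card (b \<inter> b') < t"
  then obtain T where "T \<subseteq> b \<inter> b'" "card T = t" by (meson not_less obtain_subset_with_card_n)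
  then show False using steiner_block_unique[OF assms(1-3)] assms(4) by blast
qed

lemma card_covered_subsets:
  assumes "finite B" "\<And>b. b \<in> B \<Longrightarrow> finite b \<and> card b = k"
    and "\<And>b b'. b \<in> B \<Longrightarrow> b' \<in> B \<Longrightarrow> b \<noteq> b' \<Longrightarrow> card (b \<inter> b') < t"
  shows "card (\<Union>b\<in>B. {T. T \<subseteq> b \<and> card T = t}) = card B * (k choose t)"
proof -
  have disjoint: "{T. T \<subseteq> b \<and> card T = t} \<inter> {T. T \<subseteq> b' \<and> card T = t} = {}"
    if "b \<in> B" "b' \<in> B" "b \<noteq> b'" for b b'
  proof -
    have "card T < t" if "T \<subseteq> b \<inter> b'" for T
      using that assms(2)[OF \<open>b \<in> B\<close>] assms(3)[OF \<open>b \<in> B\<close> \<open>b' \<in> B\<close> \<open>b \<noteq> b'\<close>]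
      by (meson card_mono finite_Int le_less_trans)
    then show ?thesis by blast
  qed
  have "finite {T. T \<subseteq> b \<and> card T = t}" if "b \<in> B" for b
    using assms(2)[OF that] by simp
  then have "card (\<Union>b\<in>B. {T. T \<subseteq> b \<and> card T = t}) = (\<Sum>b\<in>B. card {T. T \<subseteq> b \<and> card T = t})"
    using assms(1) disjoint by (intro card_UN_disjoint) blast+
  also have "\<dots> = (\<Sum>b\<in>B. k choose t)"
    using assms(2) by (intro sum.cong) (simp_all add: n_subsets)
  finally show ?thesis by simp
qed

lemma steiner_card_blocks:
  assumes "steiner t k n N B"
  shows "card B * (k choose t) = n choose t"
proof -
  have "(\<Union>b\<in>B. {T. T \<subseteq> b \<and> card T = t}) = {T. T \<subseteq> N \<and> card T = t}"
    using steiner_covers[OF assms] by (auto dest!: steiner_block(1)[OF assms])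
  moreover have "card (\<Union>b\<in>B. {T. T \<subseteq> b \<and> card T = t}) = card B * (k choose t)"
    using steiner_finite_blocks[OF assms] steiner_block(2,3)[OF assms] steiner_card_Int_less[OF assms]
    by (intro card_covered_subsets) simp_all
  ultimately show ?thesis using steiner_points[OF assms] by (simp add: n_subsets)
qed

lemma steiner_if_card_blocks:
  assumes N: "finite N" "card N = n"
    and blocks: "\<And>b. b \<in> B \<Longrightarrow> b \<subseteq> N \<and> card b = k"
    and packing: "\<And>b b'. b \<in> B \<Longrightarrow> b' \<in> B \<Longrightarrow> b \<noteq> b' \<Longrightarrow> card (b \<inter> b') < t"
    and count: "card B * (k choose t) = n choose t"
  shows "steiner t k n N B"
proof -
  have finite_block: "finite b" if "b \<in> B" for b
    using blocks[OF that] N(1) by (meson finite_subset)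
  have "B \<subseteq> Pow N" using blocks by blast
  then have "finite B" using N(1) by (meson finite_Pow_iff finite_subset)
  then have "card (\<Union>b\<in>B. {T. T \<subseteq> b \<and> card T = t}) = n choose t"
    using blocks finite_block packing count by (subst card_covered_subsets) simp_all
  also have "\<dots> = card {T. T \<subseteq> N \<and> card T = t}" using N by (simp add: n_subsets)
  finally have covered: "(\<Union>b\<in>B. {T. T \<subseteq> b \<and> card T = t}) = {T. T \<subseteq> N \<and> card T = t}"
    using blocks N(1) by (intro card_subset_eq) auto
  have unique: "\<exists>!b. b \<in> B \<and> T \<subseteq> b" if "T \<subseteq> N" "card T = t" for T
  proof -
    have "T \<in> (\<Union>b\<in>B. {T. T \<subseteq> b \<and> card T = t})" using that covered by simp
    then obtain b where b: "b \<in> B" "T \<subseteq> b" by blast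
    moreover have "b' = b" if "b' \<in> B" "T \<subseteq> b'" for b'
    proof (rule ccontr)
      assume "b' \<noteq> b"
      then have "card (b' \<inter> b) < t" using packing that(1) b(1) by blast
      moreover have "card T \<le> card (b' \<inter> b)"
        using that b finite_block[OF b(1)] by (intro card_mono) auto
      ultimately show False using \<open>card T = t\<close> by simp
    qed
    ultimately show ?thesis by blast
  qed
  show ?thesis unfolding steiner_def using N blocks unique by simp
qed

lemma steiner_card_blocks_containing:
  assumes st: "steiner t k n N B" and "1 \<le> t" and T: "T \<subseteq> N" "card T = t - 1"
  shows "card {b \<in> B. T \<subseteq> b} * (k - (t - 1)) = n - (t - 1)"
proof -
  have "finite T" using T(1) steiner_points(1)[OF st] by (rule finite_subset)
  have card_insert: "card (insert z T) = t" if "z \<notin> T" for z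
    using that T(2) \<open>finite T\<close> \<open>1 \<le> t\<close> by simp
  let ?BT = "{b \<in> B. T \<subseteq> b}"
  have "\<exists>b\<in>?BT. z \<in> b" if "z \<in> N - T" for z
    using steiner_covers[OF st, of "insert z T"] that T(1) card_insert by auto
  then have "(\<Union>b\<in>?BT. b - T) = N - T" by (auto dest!: steiner_block(1)[OF st])
  moreover have "(b - T) \<inter> (b' - T) = {}" if "b \<in> ?BT" "b' \<in> ?BT" "b \<noteq> b'" for b b'
  proof (rule ccontr)
    assume "(b - T) \<inter> (b' - T) \<noteq> {}"
    then obtain z where "z \<in> b - T" "z \<in> b' - T" by blast
    then show False
      using steiner_block_unique[OF st, of b b' "insert z T"] that card_insert by auto
  qed
  then have "card (\<Union>b\<in>?BT. b - T) = (\<Sum>b\<in>?BT. card (b - T))"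
    using steiner_finite_blocks[OF st] steiner_block(3)[OF st] by (intro card_UN_disjoint) auto
  moreover have "card (b - T) = k - (t - 1)" if "b \<in> ?BT" for b
    using that steiner_block[OF st] T(2) \<open>finite T\<close> by (simp add: card_Diff_subset)
  ultimately show ?thesis using T steiner_points[OF st] \<open>finite T\<close> by (simp add: card_Diff_subset)
qed

definition support :: "'i set \<Rightarrow> ('i \<Rightarrow> nat) \<Rightarrow> 'i set" where
  "support I x = {i \<in> I. x i \<noteq> 0}"

definition agreement :: "'i set \<Rightarrow> ('i \<Rightarrow> nat) \<Rightarrow> ('i \<Rightarrow> nat) \<Rightarrow> 'i set" where
  "agreement I x y = {i \<in> support I x \<inter> support I y. x i = y i}"

lemma card_disagreement:
  assumes "finite I"
  shows "card {i \<in> I. x i \<noteq> y i} + card (support I x \<inter> support I y) + card (agreement I x y)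
    = card (support I x) + card (support I y)"
proof -
  let ?U = "support I x \<union> support I y"
  have finite: "finite (support I x)" "finite (support I y)"
    using assms unfolding support_def by simp_all
  have "{i \<in> I. x i \<noteq> y i} = ?U - agreement I x y"
    unfolding support_def agreement_def by auto
  moreover have "agreement I x y \<subseteq> ?U" unfolding agreement_def by blast
  ultimately have "card {i \<in> I. x i \<noteq> y i} + card (agreement I x y) = card ?U"
    using finite by (simp add: card_Diff_subset card_mono finite_subset)
  then show ?thesis using card_Un_Int[OF finite] by simp
qed

lemma hdist_conv_card:
  assumes "length y = length x"
  shows "hdist x y = card {i \<in> {0..<length x}. x ! i \<noteq> y ! i}"
  unfolding hdist_def by (rule arg_cong[where f = card]) auto

lemma wt_conv_card_support: "wt x = card (support {0..<length x} (nth x))"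
  unfolding wt_def support_def by (rule arg_cong[where f = card]) auto

lemma card_Collect_bij_betw:
  assumes "bij_betw g I N"
  shows "card {i \<in> I. P (g i)} = card {p \<in> N. P p}"
proof -
  have "{p \<in> N. P p} = g ` {i \<in> I. P (g i)}" using assms by (auto simp: bij_betw_def)
  moreover have "inj_on g {i \<in> I. P (g i)}"
    using assms unfolding bij_betw_def by (blast intro: inj_on_subset)
  ultimately show ?thesis by (simp add: card_image)
qed

lemma hdist_map_bij_betw:
  assumes "bij_betw g {0..<n} N"
  shows "hdist (map (x \<circ> g) [0..<n]) (map (y \<circ> g) [0..<n]) = card {p \<in> N. x p \<noteq> y p}"
proof -
  have "hdist (map (x \<circ> g) [0..<n]) (map (y \<circ> g) [0..<n]) = card {i \<in> {0..<n}. x (g i) \<noteq> y (g i)}"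
    by (simp add: hdist_conv_card cong: conj_cong)
  then show ?thesis using card_Collect_bij_betw[OF assms] by simp
qed

lemma wt_map_bij_betw:
  assumes "bij_betw g {0..<n} N"
  shows "wt (map (x \<circ> g) [0..<n]) = card (support N x)"
proof -
  have "wt (map (x \<circ> g) [0..<n]) = card {i \<in> {0..<n}. x (g i) \<noteq> 0}"
    by (simp add: wt_conv_card_support support_def cong: conj_cong)
  then show ?thesis using card_Collect_bij_betw[OF assms] by (simp add: support_def)
qed

lemma cw_code_overlap:
  assumes code: "cw_code q n w (2 * w - t + 1) M C" and "x \<in> C" "y \<in> C" "x \<noteq> y"
  shows "card (support {0..<n} (nth x) \<inter> support {0..<n} (nth y))
    + card (agreement {0..<n} (nth x) (nth y)) < t"
proof -
  have "x \<in> Jq q n w" "y \<in> Jq q n w" using code assms(2,3) unfolding cw_code_def by auto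
  then have "length x = n" "length y = n"
    and "card (support {0..<n} (nth x)) = w" "card (support {0..<n} (nth y)) = w"
    unfolding Jq_def by (auto simp: wt_conv_card_support)
  moreover have "2 * w - t + 1 \<le> hdist x y" using code assms(2-4) unfolding cw_code_def by blast
  ultimately show ?thesis
    using card_disagreement[of "{0..<n}" "nth x" "nth y"] by (simp add: hdist_conv_card)
qed

lemma steiner_dvd:
  assumes st: "steiner t k n N B" and "1 \<le> t" "t - 1 \<le> n"
  shows "k - (t - 1) dvd n - (t - 1)"
proof -
  obtain T where "T \<subseteq> N" "card T = t - 1"
    using obtain_subset_with_card_n[of "t - 1" N] steiner_points(2)[OF st] assms(3) by metis
  then show ?thesis using steiner_card_blocks_containing[OF st \<open>1 \<le> t\<close>] by (metis dvd_triv_right)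
qed

lemma cw_code_support_steiner:
  assumes code: "cw_code q n w (2 * w - t + 1) M C"
    and "t \<le> w" and count: "M * (w choose t) = n choose t"
  shows "inj_on (\<lambda>x. support {0..<n} (nth x)) C"
    and "steiner t w n {0..<n} ((\<lambda>x. support {0..<n} (nth x)) ` C)"
proof -
  define S where "S x = support {0..<n} (nth x)" for x
  have weight: "card (S x) = w" if "x \<in> C" for x
    using code that unfolding cw_code_def Jq_def S_def by (auto simp: wt_conv_card_support)
  have overlap: "card (S x \<inter> S y) < t" if "x \<in> C" "y \<in> C" "x \<noteq> y" for x y
    using cw_code_overlap[OF code that] unfolding S_def by simp
  show "inj_on S C"
  proof (rule inj_onI, rule ccontr)
    fix x y assume "x \<in> C" "y \<in> C" "S x = S y" "x \<noteq> y"
    then show False using overlap[of x y] weight[of x] \<open>t \<le> w\<close> by simp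
  qed
  moreover have "card C = M" using code unfolding cw_code_def by blast
  ultimately have "card (S ` C) * (w choose t) = n choose t" using count by (simp add: card_image)
  moreover have "S x \<subseteq> {0..<n}" for x unfolding S_def support_def by blast
  moreover have "card (b \<inter> b') < t" if "b \<in> S ` C" "b' \<in> S ` C" "b \<noteq> b'" for b b'
    using that overlap by fastforce
  ultimately show "steiner t w n {0..<n} (S ` C)"
    using weight by (intro steiner_if_card_blocks) auto
qed

lemma cw_code_symbols_differ:
  assumes code: "cw_code q n w (2 * w - t + 1) M C" and "x \<in> C" "y \<in> C" "x \<noteq> y"
    and T: "T \<subseteq> support {0..<n} (nth x) \<inter> support {0..<n} (nth y)" "card T = t - 1"
    and "i \<in> T"
  shows "x ! i \<noteq> y ! i"
proof
  assume "x ! i = y ! i"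
  then have "i \<in> agreement {0..<n} (nth x) (nth y)" using T(1) \<open>i \<in> T\<close> unfolding agreement_def by blast
  then have "0 < card (agreement {0..<n} (nth x) (nth y))"
    by (auto simp: card_gt_0_iff agreement_def support_def)
  moreover have "t - 1 \<le> card (support {0..<n} (nth x) \<inter> support {0..<n} (nth y))"
    using T card_mono[OF _ T(1)] by (simp add: support_def)
  ultimately show False using cw_code_overlap[OF code assms(2-4)] by linarith
qed

text \<open>The supports of an optimal code form a Steiner system, so \<open>(n - t + 1) / (w - t + 1)\<close> codewords
  have supports containing \<open>{0..<t - 1}\<close>; they carry pairwise distinct nonzero symbols at \<open>0\<close>.\<close>

lemma cw_code_lower_bound:
  assumes code: "cw_code q n w (2 * w - t + 1) M C"
    and "2 \<le> t" "t \<le> w" "w \<le> n" and count: "M * (w choose t) = n choose t"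
  shows "(n - (t - 1)) div (w - (t - 1)) + 1 \<le> q"
proof -
  define S where "S x = support {0..<n} (nth x)" for x
  define T where "T = {0..<t - 1}"
  define X where "X = {x \<in> C. T \<subseteq> S x}"
  have T: "T \<subseteq> {0..<n}" "card T = t - 1" "0 \<in> T" using assms(2-4) unfolding T_def by auto
  have "card {b \<in> S ` C. T \<subseteq> b} * (w - (t - 1)) = n - (t - 1)"
    using steiner_card_blocks_containing[OF cw_code_support_steiner(2)[OF code \<open>t \<le> w\<close> count]] T
      \<open>2 \<le> t\<close> unfolding S_def by simp
  moreover have "{b \<in> S ` C. T \<subseteq> b} = S ` X" unfolding X_def by blast
  moreover have "card (S ` X) = card X"
    using inj_on_subset[OF cw_code_support_steiner(1)[OF code \<open>t \<le> w\<close> count]]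
    by (simp add: card_image X_def S_def)
  ultimately have card_X: "card X * (w - (t - 1)) = n - (t - 1)" by simp
  have "inj_on (\<lambda>x. x ! 0) X"
    using cw_code_symbols_differ[OF code _ _ _ _ T(2) T(3)] unfolding inj_on_def X_def S_def by blast
  moreover have "(\<lambda>x. x ! 0) ` X \<subseteq> {1..<q}"
  proof
    fix v assume "v \<in> (\<lambda>x. x ! 0) ` X"
    then obtain x where x: "x \<in> C" "0 \<in> S x" "v = x ! 0" unfolding X_def using T(3) by blast
    moreover have "length x = n" "set x \<subseteq> {0..<q}" using code x(1) unfolding cw_code_def Jq_def by auto
    ultimately have "x ! 0 \<noteq> 0" "x ! 0 \<in> set x" by (auto simp: S_def support_def)
    then show "v \<in> {1..<q}" using x(3) \<open>set x \<subseteq> {0..<q}\<close> by auto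
  qed
  ultimately have "card X \<le> card {1..<q}" by (intro card_inj_on_le) simp_all
  moreover have "0 < n - (t - 1)" "0 < w - (t - 1)" using assms(2-4) by auto
  then have "(n - (t - 1)) div (w - (t - 1)) = card X" "card X \<noteq> 0"
    using card_X by (metis nonzero_mult_div_cancel_right less_irrefl, metis mult_0 less_irrefl)
  ultimately show ?thesis by simp
qed

text \<open>Colour each block by its parallel class; the number of classes is at most the number of
  blocks through a fixed point \<open>q\<close>, since every class has exactly one of them.\<close>

lemma resolvable_colouring:
  assumes "resolvable X D" "finite D" "q \<in> X"
  shows "\<exists>\<kappa>. \<kappa> ` D \<subseteq> {1..card {d \<in> D. q \<in> d}} \<and>
    (\<forall>d\<in>D. \<forall>d'\<in>D. d \<noteq> d' \<and> d \<inter> d' \<noteq> {} \<longrightarrow> \<kappa> d \<noteq> \<kappa> d')"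
proof -
  obtain P where P: "partition_on D P" "\<And>C. C \<in> P \<Longrightarrow> partition_on X C"
    using assms(1) unfolding resolvable_def by blast
  have same_class: "C = C'" if "C \<in> P" "C' \<in> P" "d \<in> C" "d \<in> C'" for C C' d
    using disjointD[OF partition_onD2[OF P(1)]] that by blast
  have "\<exists>d\<in>C. q \<in> d" if "C \<in> P" for C
    using partition_onD1[OF P(2)[OF that]] assms(3) by blast
  then obtain h where h: "\<And>C. C \<in> P \<Longrightarrow> h C \<in> C \<and> q \<in> h C" by metis
  have "inj_on h P" using h same_class by (metis inj_onI)
  moreover have "h ` P \<subseteq> {d \<in> D. q \<in> d}" using h partition_onD1[OF P(1)] by blast
  ultimately have "card P \<le> card {d \<in> D. q \<in> d}" using assms(2) by (intro card_inj_on_le) auto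
  then obtain e where e: "e ` P \<subseteq> {1..card {d \<in> D. q \<in> d}}" "inj_on e P"
    using card_le_inj[OF finite_elements[OF assms(2) P(1)], of "{1..card {d \<in> D. q \<in> d}}"] by auto
  have "\<exists>C\<in>P. d \<in> C" if "d \<in> D" for d using partition_onD1[OF P(1)] that by blast
  then obtain cls where cls: "\<And>d. d \<in> D \<Longrightarrow> cls d \<in> P \<and> d \<in> cls d" by metis
  show ?thesis
  proof (intro exI conjI ballI impI)
    show "(\<lambda>d. e (cls d)) ` D \<subseteq> {1..card {d \<in> D. q \<in> d}}" using cls e(1) by blast
    fix d d' assume "d \<in> D" "d' \<in> D" "d \<noteq> d' \<and> d \<inter> d' \<noteq> {}"
    moreover have "cls d = cls d'" if "e (cls d) = e (cls d')"
      using inj_onD[OF e(2) that] cls \<open>d \<in> D\<close> \<open>d' \<in> D\<close> by blast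
    ultimately show "e (cls d) \<noteq> e (cls d')"
      using disjointD[OF partition_onD2[OF P(2)]] cls by metis
  qed
qed

lemma steiner3_derived_colouring:
  assumes st: "steiner 3 w n N B" and res: "resolvable (N - {p}) (derived_blocks B p)"
    and "p \<in> N" "3 \<le> w" "w < n"
  shows "\<exists>\<kappa>. \<kappa> ` derived_blocks B p \<subseteq> {1..(n - 2) div (w - 2)} \<and>
    (\<forall>d\<in>derived_blocks B p. \<forall>d'\<in>derived_blocks B p. d \<noteq> d' \<and> d \<inter> d' \<noteq> {} \<longrightarrow> \<kappa> d \<noteq> \<kappa> d')"
proof -
  have "card (N - {p}) \<noteq> 0" using steiner_points[OF st] assms(3-5) by simp
  then obtain q where q: "q \<in> N - {p}" by (metis all_not_in_conv card.empty)
  have derived: "derived_blocks B p = (\<lambda>b. b - {p}) ` {b \<in> B. p \<in> b}"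
    unfolding derived_blocks_def by blast
  then have "finite (derived_blocks B p)" using steiner_finite_blocks[OF st] by simp
  have "card {p, q} = 2" using q by auto
  then have "card {b \<in> B. {p, q} \<subseteq> b} * (w - 2) = n - 2"
    using steiner_card_blocks_containing[OF st, of "{p, q}"] q \<open>p \<in> N\<close> by simp
  moreover have "0 < w - 2" using \<open>3 \<le> w\<close> by simp
  ultimately have "card {b \<in> B. {p, q} \<subseteq> b} = (n - 2) div (w - 2)"
    by (metis nonzero_mult_div_cancel_right less_irrefl)
  have "finite {b \<in> B. {p, q} \<subseteq> b}" using steiner_finite_blocks[OF st] by simp
  then have "card {d \<in> derived_blocks B p. q \<in> d} \<le> card ((\<lambda>b. b - {p}) ` {b \<in> B. {p, q} \<subseteq> b})"
    using derived by (intro card_mono) auto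
  also have "\<dots> \<le> card {b \<in> B. {p, q} \<subseteq> b}"
    using \<open>finite {b \<in> B. {p, q} \<subseteq> b}\<close> by (rule card_image_le)
  also have "\<dots> = (n - 2) div (w - 2)" by fact
  finally have "{1..card {d \<in> derived_blocks B p. q \<in> d}} \<subseteq> {1..(n - 2) div (w - 2)}" by simp
  with resolvable_colouring[OF res \<open>finite (derived_blocks B p)\<close> q] show ?thesis
    by (meson order_trans)
qed

text \<open>The codeword of a block \<open>b\<close> carries at each point \<open>p \<in> b\<close> the colour \<open>\<kappa> p (b - {p})\<close>,
  i.e. the parallel class of \<open>b - {p}\<close> in a resolution of the system derived at \<open>p\<close>.\<close>

definition block_word :: "('a \<Rightarrow> 'a set \<Rightarrow> nat) \<Rightarrow> 'a set \<Rightarrow> 'a \<Rightarrow> nat" where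
  "block_word \<kappa> b p = (if p \<in> b then \<kappa> p (b - {p}) else 0)"

lemma block_word_overlap:
  assumes st: "steiner 3 w n N B" and "b \<in> B" "b' \<in> B" "b \<noteq> b'"
    and proper: "\<And>p d d'. p \<in> N \<Longrightarrow> d \<in> derived_blocks B p \<Longrightarrow> d' \<in> derived_blocks B p
      \<Longrightarrow> d \<noteq> d' \<Longrightarrow> d \<inter> d' \<noteq> {} \<Longrightarrow> \<kappa> p d \<noteq> \<kappa> p d'"
  shows "card (b \<inter> b') + card (agreement N (block_word \<kappa> b) (block_word \<kappa> b')) < 3"
proof -
  let ?A = "agreement N (block_word \<kappa> b) (block_word \<kappa> b')"
  have "?A \<subseteq> b \<inter> b'" unfolding agreement_def support_def block_word_def by auto
  moreover have "finite (b \<inter> b')" using steiner_block(3)[OF st \<open>b \<in> B\<close>] by simp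
  ultimately have "card ?A \<le> card (b \<inter> b')" by (rule card_mono[rotated])
  moreover have "card (b \<inter> b') < 3" using steiner_card_Int_less[OF st assms(2-4)] .
  moreover have "?A = {}" if "card (b \<inter> b') = 2"
  proof (rule ccontr)
    assume "?A \<noteq> {}"
    then obtain p where p: "p \<in> ?A" by blast
    then have "p \<in> N" "p \<in> b" "p \<in> b'" "\<kappa> p (b - {p}) = \<kappa> p (b' - {p})"
      unfolding agreement_def support_def block_word_def by (auto split: if_splits)
    moreover obtain r where "r \<in> b \<inter> b'" "r \<noteq> p"
      using \<open>card (b \<inter> b') = 2\<close> by (metis card_2_iff insertCI)
    moreover have "b - {p} \<noteq> b' - {p}"
      using \<open>b \<noteq> b'\<close> \<open>p \<in> b\<close> \<open>p \<in> b'\<close> by (metis insert_Diff)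
    ultimately show False
      using proper[of p "b - {p}" "b' - {p}"] \<open>b \<in> B\<close> \<open>b' \<in> B\<close>
      unfolding derived_blocks_def by blast
  qed
  ultimately show ?thesis by (cases "card (b \<inter> b') = 2") auto
qed

lemma steiner3_block_word_code:
  assumes st: "steiner 3 w n N B" and "3 \<le> w" and g: "bij_betw g {0..<n} N"
    and \<kappa>: "\<And>p. p \<in> N \<Longrightarrow> \<kappa> p ` derived_blocks B p \<subseteq> {1..r}"
    and proper: "\<And>p d d'. p \<in> N \<Longrightarrow> d \<in> derived_blocks B p \<Longrightarrow> d' \<in> derived_blocks B p
      \<Longrightarrow> d \<noteq> d' \<Longrightarrow> d \<inter> d' \<noteq> {} \<Longrightarrow> \<kappa> p d \<noteq> \<kappa> p d'"
  shows "cw_code (r + 1) n w (2 * w - 2) (card B) ((\<lambda>b. map (block_word \<kappa> b \<circ> g) [0..<n]) ` B)"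
proof -
  define word where "word b = map (block_word \<kappa> b \<circ> g) [0..<n]" for b
  have label: "block_word \<kappa> b p \<in> {1..r}" if "b \<in> B" "p \<in> b" for b p
  proof -
    have "b - {p} \<in> derived_blocks B p" using that unfolding derived_blocks_def by blast
    moreover have "p \<in> N" using that steiner_block(1)[OF st] by blast
    ultimately show ?thesis using \<kappa>[of p] \<open>p \<in> b\<close> unfolding block_word_def by auto
  qed
  have support: "support N (block_word \<kappa> b) = b" if "b \<in> B" for b
    using label[OF that] steiner_block(1)[OF st that]
    unfolding support_def by (force simp: block_word_def)
  have word: "word b \<in> Jq (r + 1) n w" if "b \<in> B" for b
  proof -
    have "set (word b) \<subseteq> {0..<r + 1}"
      using label[OF that] by (auto simp: word_def block_word_def) (metis le_imp_less_Suc)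
    then show ?thesis
      using wt_map_bij_betw[OF g] support[OF that] steiner_block(2)[OF st that]
      by (simp add: Jq_def word_def)
  qed
  have distance: "2 * w - 2 \<le> hdist (word b) (word b')" if "b \<in> B" "b' \<in> B" "b \<noteq> b'" for b b'
  proof -
    have "card (b \<inter> b') + card (agreement N (block_word \<kappa> b) (block_word \<kappa> b')) < 3"
      by (rule block_word_overlap[OF st that]) (rule proper)
    then show ?thesis
      using card_disagreement[OF steiner_points(1)[OF st], of "block_word \<kappa> b" "block_word \<kappa> b'"]
        support that steiner_block(2)[OF st] hdist_map_bij_betw[OF g]
      by (simp add: word_def)
  qed
  have "inj_on word B"
  proof (rule inj_onI, rule ccontr)
    fix b b' assume "b \<in> B" "b' \<in> B" "word b = word b'" "b \<noteq> b'"
    then show False using distance[of b b'] \<open>3 \<le> w\<close> by (simp add: hdist_def)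
  qed
  then show ?thesis
    using word distance unfolding cw_code_def word_def[symmetric] by (auto simp: card_image)
qed

lemma steiner3_resolvable_code:
  assumes st: "steiner 3 w n N B" and res: "\<forall>p\<in>N. resolvable (N - {p}) (derived_blocks B p)"
    and "3 \<le> w" "w < n"
  shows "\<exists>C. cw_code ((n - 2) div (w - 2) + 1) n w (2 * w - 2) (card B) C"
proof -
  let ?r = "(n - 2) div (w - 2)"
  have "\<forall>p\<in>N. \<exists>\<kappa>. \<kappa> ` derived_blocks B p \<subseteq> {1..?r} \<and>
    (\<forall>d\<in>derived_blocks B p. \<forall>d'\<in>derived_blocks B p. d \<noteq> d' \<and> d \<inter> d' \<noteq> {} \<longrightarrow> \<kappa> d \<noteq> \<kappa> d')"
    using steiner3_derived_colouring[OF st] res assms(3,4) by blast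
  then obtain \<kappa> where \<kappa>: "\<And>p. p \<in> N \<Longrightarrow> \<kappa> p ` derived_blocks B p \<subseteq> {1..?r}"
    and proper: "\<And>p d d'. p \<in> N \<Longrightarrow> d \<in> derived_blocks B p \<Longrightarrow> d' \<in> derived_blocks B p
      \<Longrightarrow> d \<noteq> d' \<Longrightarrow> d \<inter> d' \<noteq> {} \<Longrightarrow> \<kappa> p d \<noteq> \<kappa> p d'"
    by metis
  obtain g where g: "bij_betw g {0..<n} N"
    using finite_same_card_bij[of "{0..<n}" N] steiner_points[OF st] by auto
  show ?thesis using steiner3_block_word_code[OF st \<open>3 \<le> w\<close> g \<kappa> proper] by (rule exI)
qed

theorem mainTheorem10:
  fixes w n :: nat
  assumes "3 \<le> w" and "w < n"
    and "\<exists>(N :: nat set) B. steiner 3 w n N B \<and>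
           (\<forall>p\<in>N. resolvable (N - {p}) (derived_blocks B p))"
  shows "real (q0' 3 w n) = (real n - 2) / (real w - 2) + 1"
proof -
  obtain N :: "nat set" and B where st: "steiner 3 w n N B"
    and res: "\<forall>p\<in>N. resolvable (N - {p}) (derived_blocks B p)"
    using assms(3) by blast
  have "0 < w choose 3" using assms(1) by simp
  then have card_B: "card B = (n choose 3) div (w choose 3)"
    using steiner_card_blocks[OF st] by (metis nonzero_mult_div_cancel_right less_irrefl)
  have d_eq: "2 * w - 3 + 1 = 2 * w - 2" using assms(1) by simp
  have "q0' 3 w n = (n - 2) div (w - 2) + 1"
    unfolding q0'_def d_eq
  proof (rule Least_equality)
    show "\<exists>C. cw_code ((n - 2) div (w - 2) + 1) n w (2 * w - 2) ((n choose 3) div (w choose 3)) C"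
      using steiner3_resolvable_code[OF st res assms(1,2)] card_B by simp
  next
    fix q assume "\<exists>C. cw_code q n w (2 * w - 2) ((n choose 3) div (w choose 3)) C"
    then obtain C where "cw_code q n w (2 * w - 3 + 1) ((n choose 3) div (w choose 3)) C"
      unfolding d_eq by blast
    moreover have "(n choose 3) div (w choose 3) * (w choose 3) = n choose 3"
      using steiner_card_blocks[OF st] card_B by simp
    ultimately have "(n - (3 - 1)) div (w - (3 - 1)) + 1 \<le> q"
      using assms(1,2) by (intro cw_code_lower_bound) simp_all
    then show "(n - 2) div (w - 2) + 1 \<le> q" by simp
  qed
  moreover have "w - 2 dvd n - 2" using steiner_dvd[OF st] assms(1,2) by simp
  ultimately show ?thesis using assms(1,2) by (simp add: real_of_nat_div)
qed

end
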